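(* Let $n\ge3$ and $G=C_n\Box P_2$ (the $n$-prism, with $2n$ vertices). Then $$3+\sqrt{3(2n-1)(2n-3)}\ >\ E(G)=QE(G)\ \ge\ \begin{cases}2n & \text{if } n\equiv0\pmod3,\\[4pt] 6n\cdot\dfrac{\sqrt{2\cos\big(\frac{2\pi\lfloor n/6\rfloor}{n}\big)-1}}{1+\cos\big(\frac{2\pi\lfloor n/6\rfloor}{n}\big)} & \text{if } n\equiv1\text{ or }2\pmod 6,\\[10pt] 6n\cdot\dfrac{\sqrt{1-2\cos\big(\frac{2\pi\lceil n/6\rceil}{n}\big)}}{2-\cos\big(\frac{2\pi\lceil n/6\rceil}{n}\big)} & \text{if } n\equiv4\text{ or }5\pmod6,\end{cases}$$ and equality holds in the right-hand (lower) inequality if and only if $n=4$, i.e. $G=C_4\Box P_2$.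
   Context: All graphs are finite, simple and undirected. $C_n$ is the cycle on $n$ vertices, $P_2=K_2$, and $\Box$ is the Cartesian product of graphs. For a graph $G$ with $N$ vertices and $m$ edges, let $q_1\ge\cdots\ge q_N\ge0$ be the eigenvalues of the signless Laplacian $Q(G)=D(G)+A(G)$ (degree diagonal matrix plus adjacency matrix). The signless Laplacian energy is $QE(G)=\sum_{i=1}^N|q_i-\frac{2m}{N}|$, and the energy is $E(G)=\sum_i|\lambda_i|$ over the eigenvalues $\lambda_i$ of the adjacency matrix. *)

theory Defs
  imports "Jordan_Normal_Form.Char_Poly" "HOL-Library.Multiset"
begin

text \<open>A finite simple graph on the vertex set {0..<N} is given by an edge relation
  E (assumed symmetric and irreflexive where relevant).\<close>

definition adj_mat :: "nat \<Rightarrow> (nat \<Rightarrow> nat \<Rightarrow> bool) \<Rightarrow> real mat" where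
  "adj_mat N E = mat N N (\<lambda>(i,j). if E i j then 1 else 0)"

definition vdeg :: "nat \<Rightarrow> (nat \<Rightarrow> nat \<Rightarrow> bool) \<Rightarrow> nat \<Rightarrow> nat" where
  "vdeg N E i = card {j. j < N \<and> E i j}"

definition deg_mat :: "nat \<Rightarrow> (nat \<Rightarrow> nat \<Rightarrow> bool) \<Rightarrow> real mat" where
  "deg_mat N E = mat N N (\<lambda>(i,j). if i = j then real (vdeg N E i) else 0)"

definition signless_laplacian :: "nat \<Rightarrow> (nat \<Rightarrow> nat \<Rightarrow> bool) \<Rightarrow> real mat" where
  "signless_laplacian N E = deg_mat N E + adj_mat N E"

definition num_edges :: "nat \<Rightarrow> (nat \<Rightarrow> nat \<Rightarrow> bool) \<Rightarrow> nat" where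
  "num_edges N E = card {(i,j). i < j \<and> j < N \<and> E i j}"

definition eigvals :: "real mat \<Rightarrow> complex multiset" where
  "eigvals A = (SOME M. char_poly (map_mat complex_of_real A) = (\<Prod>a\<in>#M. [:- a, 1:]))"

definition graph_energy :: "nat \<Rightarrow> (nat \<Rightarrow> nat \<Rightarrow> bool) \<Rightarrow> real" where
  "graph_energy N E = (\<Sum>\<^sub># (image_mset cmod (eigvals (adj_mat N E))))"

definition signless_laplacian_energy :: "nat \<Rightarrow> (nat \<Rightarrow> nat \<Rightarrow> bool) \<Rightarrow> real" where
  "signless_laplacian_energy N E =
     (\<Sum>\<^sub># (image_mset (\<lambda>q. cmod (q - complex_of_real (2 * real (num_edges N E) / real N)))
        (eigvals (signless_laplacian N E))))"

text \<open>The prism C_n \<box> P_2 on vertices {0..<2n}: vertex k corresponds to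
  (k mod n, k div n) \<in> Z_n \<times> {0,1}.\<close>
definition prism_edge :: "nat \<Rightarrow> nat \<Rightarrow> nat \<Rightarrow> bool" where
  "prism_edge n k l \<longleftrightarrow>
     (k div n = l div n \<and> ((k mod n + 1) mod n = l mod n \<or> (l mod n + 1) mod n = k mod n))
     \<or> (k mod n = l mod n \<and> k div n \<noteq> l div n)"

end

(*
  The prism is the Cartesian product of C_n and K_2, so its adjacency matrix is diagonalised by
  the Kronecker product of the Fourier matrix of C_n and the Hadamard matrix of K_2; the
  eigenvalues are 2 cos (2 pi j / n) + 1 and 2 cos (2 pi j / n) - 1 for j < n.  The prism is
  3-regular with 3n edges, so Q = A + 3 I and 2m/N = 3, whence QE = E.

  The squared eigenvalues sum to 2m = 6n and one eigenvalue is 3; the strict Cauchy-Schwarz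
  inequality for the other 2n - 1 gives the upper bound.  For the lower bound, the pair belonging
  to j contributes |2c + 1| + |2c - 1| >= 2, with 4 at c = 1 and, for even n, at c = -1, so
  E >= 2n + 2 (+ 2 if n is even).  The stated bound lies strictly below this except at n = 4,
  where both equal 12.
*)

theory Submission
  imports Defs "HOL-Analysis.Complex_Transcendental"
begin

lemma proots_prod_mset_linear: "proots (\<Prod>a\<in>#X. [:- a, 1:]) = (X :: complex multiset)"
proof (induction X)
  case (add x X)
  have "(\<Prod>a\<in>#X. [:- a, 1:]) \<noteq> (0::complex poly)"
    by (auto simp: prod_mset_zero_iff)
  then have "proots ([:- x, 1:] * (\<Prod>a\<in>#X. [:- a, 1:]))
      = proots [:- x, 1:] + proots (\<Prod>a\<in>#X. [:- a, 1:])"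
    by (intro proots_mult) simp_all
  then show ?case
    using add proots_linear_factor[of "- x"] by simp
qed simp

lemma eigvals_eqI:
  assumes "char_poly (map_mat complex_of_real A) = (\<Prod>a\<in>#X. [:- a, 1:])"
  shows "eigvals A = X"
proof -
  have "char_poly (map_mat complex_of_real A) = (\<Prod>a\<in>#eigvals A. [:- a, 1:])"
    unfolding eigvals_def by (rule someI[of _ X]) (fact assms)
  then show ?thesis
    using assms proots_prod_mset_linear by metis
qed

lemma char_poly_if_diagonalized:
  fixes M P Q :: "'a :: field mat" and ev :: "nat \<Rightarrow> 'a"
  assumes M: "M \<in> carrier_mat N N" and P: "P \<in> carrier_mat N N" and Q: "Q \<in> carrier_mat N N"
    and PQ: "P * Q = 1\<^sub>m N"
    and MP: "M * P = P * Matrix.mat N N (\<lambda>(i,j). if i = j then ev i else 0)"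
  shows "char_poly M = (\<Prod>a\<in># mset (map ev [0..<N]). [:- a, 1:])"
proof -
  define D where "D = Matrix.mat N N (\<lambda>(i,j). if i = j then ev i else 0)"
  have D: "D \<in> carrier_mat N N" unfolding D_def by simp
  have "M = (M * P) * Q" using M P Q PQ by (simp add: assoc_mult_mat)
  then have "M = P * D * Q" using MP unfolding D_def by simp
  then have "similar_mat M D"
    using M D P Q PQ mat_mult_left_right_inverse[OF P Q PQ] by (intro similar_matI[of M D P Q N]) auto
  then have "char_poly M = char_poly D" by (rule char_poly_similar)
  also have "\<dots> = (\<Prod>a \<leftarrow> diag_mat D. [:- a, 1:])"
    by (rule char_poly_upper_triangular[OF D]) (auto simp: upper_triangular_def D_def)
  also have "diag_mat D = map ev [0..<N]"
    unfolding diag_mat_def D_def by (simp add: list_eq_iff_nth_eq)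
  finally show ?thesis by (simp only: mset_map[symmetric] prod_mset_prod_list map_map)
qed

definition prism_succ :: "nat \<Rightarrow> nat \<Rightarrow> nat" where
  "prism_succ n r = (r div n) * n + (r mod n + 1) mod n"

definition prism_pred :: "nat \<Rightarrow> nat \<Rightarrow> nat" where
  "prism_pred n r = (r div n) * n + (r mod n + n - 1) mod n"

definition prism_opp :: "nat \<Rightarrow> nat \<Rightarrow> nat" where
  "prism_opp n r = (1 - r div n) * n + r mod n"

lemma prism_neighbour_div_mod:
  assumes "0 < n"
  shows "prism_succ n r div n = r div n" "prism_succ n r mod n = (r mod n + 1) mod n"
    "prism_pred n r div n = r div n" "prism_pred n r mod n = (r mod n + n - 1) mod n"
    "prism_opp n r div n = 1 - r div n" "prism_opp n r mod n = r mod n"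
  using assms by (simp_all add: prism_succ_def prism_pred_def prism_opp_def)

lemma add_one_mod_eq_if:
  fixes e n :: nat
  shows "e < n \<Longrightarrow> (e + 1) mod n = (if e + 1 = n then 0 else e + 1)"
  by auto

lemma add_pred_mod_eq_if:
  fixes a n :: nat
  assumes "a < n"
  shows "(a + n - 1) mod n = (if a = 0 then n - 1 else a - 1)"
proof (cases "a = 0")
  case False
  then have "a + n - 1 = (a - 1) + n" by simp
  then show ?thesis using assms False by (metis mod_add_self2 mod_less less_imp_diff_less)
qed (use assms in simp)

lemma add_one_mod_eq_iff:
  fixes a e n :: nat
  assumes "a < n" "e < n"
  shows "(e + 1) mod n = a \<longleftrightarrow> e = (a + n - 1) mod n"
  unfolding add_one_mod_eq_if[OF assms(2)] add_pred_mod_eq_if[OF assms(1)] using assms by auto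

lemma add_one_mod_neq_pred_mod:
  fixes a n :: nat
  assumes "3 \<le> n" "a < n"
  shows "(a + 1) mod n \<noteq> (a + n - 1) mod n"
  unfolding add_one_mod_eq_if[OF assms(2)] add_pred_mod_eq_if[OF assms(2)] using assms by auto

lemma less_2_eq_1_minus_iff:
  fixes x y :: nat
  shows "x < 2 \<Longrightarrow> y < 2 \<Longrightarrow> y = 1 - x \<longleftrightarrow> y \<noteq> x"
  by arith

lemma prism_edge_iff:
  assumes n: "3 \<le> n" and r: "r < 2 * n" and k: "k < 2 * n"
  shows "prism_edge n r k \<longleftrightarrow> k = prism_succ n r \<or> k = prism_pred n r \<or> k = prism_opp n r"
proof -
  have n0: "0 < n" using n by simp
  have eq: "k = x \<longleftrightarrow> k div n = x div n \<and> k mod n = x mod n" for x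
    by (metis div_mult_mod_eq)
  have "r div n < 2" "k div n < 2" using r k by (auto simp: div_less_iff_less_mult)
  then have "k div n = 1 - r div n \<longleftrightarrow> k div n \<noteq> r div n" by (rule less_2_eq_1_minus_iff)
  moreover have "(k mod n + 1) mod n = r mod n \<longleftrightarrow> k mod n = (r mod n + n - 1) mod n"
    using n0 by (intro add_one_mod_eq_iff) auto
  ultimately show ?thesis
    unfolding prism_edge_def eq[of "prism_succ n r"] eq[of "prism_pred n r"] eq[of "prism_opp n r"]
      prism_neighbour_div_mod[OF n0] by metis
qed

lemma prism_neighbours:
  assumes n: "3 \<le> n" and r: "r < 2 * n"
  shows "{k. k < 2 * n \<and> prism_edge n r k} = {prism_succ n r, prism_pred n r, prism_opp n r}"
    and "prism_succ n r \<noteq> prism_pred n r" "prism_succ n r \<noteq> prism_opp n r"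
      "prism_pred n r \<noteq> prism_opp n r"
proof -
  have n0: "0 < n" using n by simp
  have rdiv: "r div n < 2" using r by (auto simp: div_less_iff_less_mult)
  have "x mod n < 2 * n" for x using mod_less_divisor[of n x] n by linarith
  then have "prism_succ n r < 2 * n \<and> prism_pred n r < 2 * n \<and> prism_opp n r < 2 * n"
    using n rdiv by (auto simp: less_2_cases_iff prism_succ_def prism_pred_def prism_opp_def)
  then show "{k. k < 2 * n \<and> prism_edge n r k} = {prism_succ n r, prism_pred n r, prism_opp n r}"
    using prism_edge_iff[OF n r] by auto
  have "(r mod n + 1) mod n \<noteq> (r mod n + n - 1) mod n"
    using n by (intro add_one_mod_neq_pred_mod) auto
  moreover have "r div n \<noteq> 1 - r div n" using less_2_eq_1_minus_iff[OF rdiv rdiv] by blast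
  ultimately show "prism_succ n r \<noteq> prism_pred n r" "prism_succ n r \<noteq> prism_opp n r"
      "prism_pred n r \<noteq> prism_opp n r"
    using prism_neighbour_div_mod[OF n0] by metis+
qed

lemma prism_edge_sym: "prism_edge n i j = prism_edge n j i"
  unfolding prism_edge_def by auto

lemma prism_edge_irrefl:
  assumes "3 \<le> n"
  shows "\<not> prism_edge n i i"
proof -
  have "i mod n < n" using assms by simp
  then have "(i mod n + 1) mod n \<noteq> i mod n"
    using assms unfolding add_one_mod_eq_if[OF \<open>i mod n < n\<close>] by auto
  then show ?thesis unfolding prism_edge_def by auto
qed

lemma prism_vdeg: "3 \<le> n \<Longrightarrow> r < 2 * n \<Longrightarrow> vdeg (2 * n) (prism_edge n) r = 3"
  unfolding vdeg_def by (simp add: prism_neighbours)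

lemma prism_num_edges:
  assumes n: "3 \<le> n"
  shows "num_edges (2 * n) (prism_edge n) = 3 * n"
proof -
  define L where "L = {(i,j). i < j \<and> j < 2 * n \<and> prism_edge n i j}"
  define F where "F = Sigma {..<2 * n} (\<lambda>i. {j. j < 2 * n \<and> prism_edge n i j})"
  have "card F = (\<Sum>i<2 * n. vdeg (2 * n) (prism_edge n) i)"
    unfolding F_def vdeg_def by (rule card_SigmaI) auto
  then have "card F = 6 * n" using prism_vdeg[OF n] by simp
  have "F = L \<union> prod.swap ` L" and "L \<inter> prod.swap ` L = {}"
    unfolding F_def L_def using prism_edge_irrefl[OF n]
    by (auto simp: prism_edge_sym image_iff) (metis linorder_neqE_nat)
  moreover have "finite L" unfolding L_def by (rule finite_subset[of _ "{..<2*n} \<times> {..<2*n}"]) auto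
  ultimately have "card F = 2 * card L" by (simp add: card_Un_disjoint card_image)
  then show ?thesis using \<open>card F = 6 * n\<close> unfolding num_edges_def L_def[symmetric] by simp
qed

definition unity_root :: "nat \<Rightarrow> complex" where
  "unity_root n = cis (2 * pi / real n)"

lemma unity_root_pow: "unity_root n ^ m = cis (2 * pi * real m / real n)"
  unfolding unity_root_def Complex.DeMoivre by (simp add: field_simps)

lemma unity_root_pow_self: "0 < n \<Longrightarrow> unity_root n ^ n = 1"
  unfolding unity_root_pow by simp

lemma unity_root_pow_pow_self: "0 < n \<Longrightarrow> (unity_root n ^ k) ^ n = 1"
  by (metis unity_root_pow_self power_mult mult.commute power_one)

lemma unity_root_pow_mod:
  assumes "0 < n"
  shows "unity_root n ^ m = unity_root n ^ (m mod n)"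
proof -
  have "unity_root n ^ m = unity_root n ^ (n * (m div n) + m mod n)" by simp
  also have "\<dots> = (unity_root n ^ n) ^ (m div n) * unity_root n ^ (m mod n)"
    by (simp only: power_add power_mult)
  finally show ?thesis using unity_root_pow_self[OF assms] by simp
qed

lemma inj_on_unity_root_pow: "0 < n \<Longrightarrow> inj_on (\<lambda>k. unity_root n ^ k) {..<n}"
  using Complex.bij_betw_roots_unity[of n] by (simp add: bij_betw_def unity_root_pow)

lemma unity_root_pow_neq_1:
  assumes "0 < m" "m < n"
  shows "unity_root n ^ m \<noteq> 1"
  using assms inj_onD[OF inj_on_unity_root_pow, of n m 0] by auto

lemma unity_root_pow_mult_cnj: "unity_root n ^ m * cnj (unity_root n ^ m) = 1"
  unfolding unity_root_pow by (simp add: cis_mult cis_cnj)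

lemma unity_root_pow_add_cnj:
  "unity_root n ^ j + cnj (unity_root n ^ j) = complex_of_real (2 * cos (2 * pi * real j / real n))"
  unfolding unity_root_pow by (simp add: complex_add_cnj)

lemma cnj_unity_root_pow:
  assumes "0 < n"
  shows "cnj (unity_root n ^ j) = unity_root n ^ (j * (n - 1))"
proof -
  have "j * (n - 1) + j = n * j" using assms by (cases n) simp_all
  then have "unity_root n ^ (j * (n - 1)) * unity_root n ^ j = (unity_root n ^ n) ^ j"
    by (metis power_add power_mult)
  then have "unity_root n ^ (j * (n - 1)) * unity_root n ^ j = 1"
    using unity_root_pow_self[OF assms] by simp
  moreover have "unity_root n ^ j \<noteq> 0" by (simp add: unity_root_pow)
  ultimately show ?thesis
    using unity_root_pow_mult_cnj[of n j] by (metis mult.commute mult_left_cancel)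
qed

lemma sum_unity_root_pow_eq_0:
  assumes "0 < m" "m < n"
  shows "(\<Sum>e<n. (unity_root n ^ m) ^ e) = 0"
proof -
  have "(unity_root n ^ m) ^ n = 1" using assms by (intro unity_root_pow_pow_self) simp
  then show ?thesis using assms unity_root_pow_neq_1 by (simp add: geometric_sum)
qed

lemma sum_unity_root_orthogonal:
  assumes n: "0 < n" and a: "a < n" and a': "a' < n"
  shows "(\<Sum>e<n. unity_root n ^ (e * a) * cnj (unity_root n ^ (e * a')))
    = (if a = a' then of_nat n else 0)"
proof -
  define z where "z = unity_root n ^ a * cnj (unity_root n ^ a')"
  have terms: "unity_root n ^ (e * a) * cnj (unity_root n ^ (e * a')) = z ^ e" for e
    unfolding z_def by (simp add: power_mult_distrib mult.commute flip: power_mult)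
  have z_mult: "z * unity_root n ^ a' = unity_root n ^ a"
    unfolding z_def using unity_root_pow_mult_cnj[of n a'] by (simp add: algebra_simps)
  show ?thesis
  proof (cases "a = a'")
    case True
    then have "z = 1" unfolding z_def using unity_root_pow_mult_cnj by simp
    then show ?thesis using True unfolding terms by simp
  next
    case False
    then have "unity_root n ^ a \<noteq> unity_root n ^ a'"
      using a a' inj_onD[OF inj_on_unity_root_pow[OF n]] by blast
    then have "z \<noteq> 1" using z_mult by auto
    moreover have "z ^ n = 1"
      unfolding z_def using unity_root_pow_pow_self[OF n]
      by (simp add: power_mult_distrib flip: complex_cnj_power)
    ultimately show ?thesis using False unfolding terms by (simp add: geometric_sum)
  qed
qed

lemma sum_atLeast0LessThan_double:
  fixes g :: "nat \<Rightarrow> 'a :: comm_monoid_add"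
  shows "(\<Sum>c\<in>{0..<2 * n}. g c) = (\<Sum>e<n. g e) + (\<Sum>e<n. g (n + e))"
proof -
  have "{0..<2 * n} = {0..<n} \<union> {n..<n + n}" by auto
  then have "(\<Sum>c\<in>{0..<2 * n}. g c) = (\<Sum>c\<in>{0..<n}. g c) + (\<Sum>c\<in>{0 + n..<n + n}. g c)"
    by (simp add: sum.union_disjoint)
  also have "(\<Sum>c\<in>{0 + n..<n + n}. g c) = (\<Sum>e\<in>{0..<n}. g (e + n))"
    by (rule sum.shift_bounds_nat_ivl)
  finally show ?thesis by (simp add: lessThan_atLeast0 add.commute)
qed

definition layer_sign :: "nat \<Rightarrow> nat \<Rightarrow> nat \<Rightarrow> complex" where
  "layer_sign n c r = (if c div n = 1 \<and> r div n = 1 then -1 else 1)"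

(* Kronecker product of the Fourier matrix of C_n and the Hadamard matrix of K_2 (rows and
   columns indexed by b * n + a); column c is an eigenvector for prism_eigenvalue n c. *)
definition prism_eigvecs :: "nat \<Rightarrow> complex mat" where
  "prism_eigvecs n = Matrix.mat (2 * n) (2 * n)
     (\<lambda>(r, c). unity_root n ^ ((c mod n) * (r mod n)) * layer_sign n c r)"

definition prism_eigvecs_inv :: "nat \<Rightarrow> complex mat" where
  "prism_eigvecs_inv n = Matrix.mat (2 * n) (2 * n)
     (\<lambda>(r, c). cnj (prism_eigvecs n $$ (c, r)) / of_nat (2 * n))"

lemma prism_eigvecs_inverse:
  assumes n: "0 < n"
  shows "prism_eigvecs n * prism_eigvecs_inv n = 1\<^sub>m (2 * n)"
proof (rule eq_matI)
  fix r r' assume "r < dim_row (1\<^sub>m (2 * n))" "r' < dim_col (1\<^sub>m (2 * n))"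
  then have r: "r < 2 * n" and r': "r' < 2 * n" by auto
  have "(prism_eigvecs n * prism_eigvecs_inv n) $$ (r, r')
      = (\<Sum>c\<in>{0..<2 * n}. prism_eigvecs n $$ (r, c)
          * (cnj (prism_eigvecs n $$ (r', c)) / of_nat (2 * n)))"
    using r r' unfolding times_mat_def scalar_prod_def prism_eigvecs_inv_def prism_eigvecs_def
    by simp
  also have "\<dots> = (\<Sum>e<n. unity_root n ^ (e * (r mod n)) * cnj (unity_root n ^ (e * (r' mod n))))
      * ((1 + layer_sign n n r * cnj (layer_sign n n r')) / of_nat (2 * n))"
    unfolding sum_atLeast0LessThan_double using r r' n unfolding prism_eigvecs_def
    by (simp add: sum_distrib_right sum.distrib[symmetric] layer_sign_def algebra_simps
        sum_divide_distrib[symmetric] sum_distrib_left[symmetric] sum_negf)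
  also have "\<dots> = 1\<^sub>m (2 * n) $$ (r, r')"
  proof -
    have "r = r' \<longleftrightarrow> r mod n = r' mod n \<and> r div n = r' div n" by (metis div_mult_mod_eq)
    moreover have "r div n < 2" "r' div n < 2" using r r' by (auto simp: div_less_iff_less_mult)
    ultimately show ?thesis
      unfolding sum_unity_root_orthogonal[OF n mod_less_divisor[OF n] mod_less_divisor[OF n]]
      using r r' n by (auto simp: layer_sign_def less_2_cases_iff)
  qed
  finally show "(prism_eigvecs n * prism_eigvecs_inv n) $$ (r, r') = 1\<^sub>m (2 * n) $$ (r, r')" .
qed (simp_all add: prism_eigvecs_def prism_eigvecs_inv_def)

definition prism_eigenvalue :: "nat \<Rightarrow> nat \<Rightarrow> real" where
  "prism_eigenvalue n c = 2 * cos (2 * pi * real (c mod n) / real n) + (if c div n = 0 then 1 else -1)"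

lemma unity_root_pow_mult_mod: "0 < n \<Longrightarrow> unity_root n ^ (j * (x mod n)) = unity_root n ^ (j * x)"
  by (metis unity_root_pow_mod mod_mult_right_eq)

lemma prism_eigvec_neighbour_sum:
  assumes n: "3 \<le> n" and r: "r < 2 * n" and c: "c < 2 * n"
  defines "v \<equiv> \<lambda>x. prism_eigvecs n $$ (x, c)"
  shows "v (prism_succ n r) + v (prism_pred n r) + v (prism_opp n r)
    = complex_of_real (prism_eigenvalue n c) * v r"
proof -
  have n0: "0 < n" using n by simp
  define j a \<omega> where "j = c mod n" "a = r mod n" "\<omega> = unity_root n"
  have v_eq: "x < 2 * n \<Longrightarrow> v x = \<omega> ^ (j * (x mod n)) * layer_sign n c x" for x
    unfolding v_def prism_eigvecs_def j_a_\<omega>_def using c by (simp add: mult.commute)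
  have "prism_succ n r < 2 * n" "prism_pred n r < 2 * n" "prism_opp n r < 2 * n"
    using prism_neighbours(1)[OF n r] by auto
  moreover have "\<omega> ^ (j * ((a + 1) mod n)) = \<omega> ^ (j * a) * \<omega> ^ j"
    unfolding j_a_\<omega>_def(3) unity_root_pow_mult_mod[OF n0] by (simp add: power_add distrib_left)
  moreover have "\<omega> ^ (j * ((a + n - 1) mod n)) = \<omega> ^ (j * a) * cnj (\<omega> ^ j)"
  proof -
    have "a + n - 1 = a + (n - 1)" using n0 by simp
    then show ?thesis
      unfolding j_a_\<omega>_def(3) unity_root_pow_mult_mod[OF n0] cnj_unity_root_pow[OF n0]
      by (simp add: power_add distrib_left)
  qed
  moreover have "layer_sign n c (prism_succ n r) = layer_sign n c r"
    "layer_sign n c (prism_pred n r) = layer_sign n c r"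
    unfolding layer_sign_def prism_neighbour_div_mod[OF n0] by simp_all
  ultimately have v: "v (prism_succ n r) = \<omega> ^ (j * a) * \<omega> ^ j * layer_sign n c r"
    "v (prism_pred n r) = \<omega> ^ (j * a) * cnj (\<omega> ^ j) * layer_sign n c r"
    "v (prism_opp n r) = \<omega> ^ (j * a) * layer_sign n c (prism_opp n r)"
    "v r = \<omega> ^ (j * a) * layer_sign n c r"
    using r v_eq by (simp_all add: prism_neighbour_div_mod[OF n0] j_a_\<omega>_def)
  have "r div n < 2" "c div n < 2" using r c by (auto simp: div_less_iff_less_mult)
  then have "layer_sign n c (prism_opp n r) = (if c div n = 0 then 1 else -1) * layer_sign n c r"
    by (auto simp: layer_sign_def prism_neighbour_div_mod[OF n0] less_2_cases_iff)
  then have "v (prism_succ n r) + v (prism_pred n r) + v (prism_opp n r)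
      = \<omega> ^ (j * a) * layer_sign n c r * ((\<omega> ^ j + cnj (\<omega> ^ j)) + (if c div n = 0 then 1 else -1))"
    unfolding v by (simp add: algebra_simps)
  also have "\<dots> = complex_of_real (prism_eigenvalue n c) * v r"
    unfolding v j_a_\<omega>_def unity_root_pow_add_cnj prism_eigenvalue_def by simp
  finally show ?thesis .
qed

lemma sum_prism_neighbours:
  fixes f :: "nat \<Rightarrow> 'a :: comm_monoid_add"
  assumes n: "3 \<le> n" and r: "r < 2 * n"
  shows "(\<Sum>k\<in>{0..<2 * n}. if prism_edge n r k then f k else 0)
    = f (prism_succ n r) + f (prism_pred n r) + f (prism_opp n r)"
proof -
  have "(\<Sum>k\<in>{0..<2 * n}. if prism_edge n r k then f k else 0)
      = sum f {k \<in> {0..<2 * n}. prism_edge n r k}"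
    by (rule sum.inter_filter[symmetric]) simp
  also have "{k \<in> {0..<2 * n}. prism_edge n r k} = {prism_succ n r, prism_pred n r, prism_opp n r}"
    using prism_neighbours(1)[OF n r] by auto
  finally show ?thesis using prism_neighbours(2-4)[OF n r] by (simp add: add.assoc)
qed

definition prism_adj_shift :: "nat \<Rightarrow> complex \<Rightarrow> complex mat" where
  "prism_adj_shift n t = Matrix.mat (2 * n) (2 * n)
     (\<lambda>(i, j). (if i = j then t else 0) + (if prism_edge n i j then 1 else 0))"

lemma prism_adj_shift_eigvecs:
  assumes n: "3 \<le> n"
  shows "prism_adj_shift n t * prism_eigvecs n = prism_eigvecs n
    * Matrix.mat (2 * n) (2 * n) (\<lambda>(i, j). if i = j then complex_of_real (prism_eigenvalue n i) + t else 0)"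
    (is "_ = _ * ?D")
proof (rule eq_matI)
  fix r c assume "r < dim_row (prism_eigvecs n * ?D)" "c < dim_col (prism_eigvecs n * ?D)"
  then have r: "r < 2 * n" and c: "c < 2 * n" by (simp_all add: prism_eigvecs_def)
  define v where "v = (\<lambda>x. prism_eigvecs n $$ (x, c))"
  have "(prism_adj_shift n t * prism_eigvecs n) $$ (r, c)
      = (\<Sum>k\<in>{0..<2 * n}. (if r = k then t * v k else 0) + (if prism_edge n r k then v k else 0))"
    using r c by (auto simp: prism_adj_shift_def prism_eigvecs_def v_def scalar_prod_def
        distrib_right intro!: sum.cong)
  also have "\<dots> = t * v r + (v (prism_succ n r) + v (prism_pred n r) + v (prism_opp n r))"
    using r by (simp add: sum.distrib sum_prism_neighbours[OF n r])
  also have "\<dots> = v r * (complex_of_real (prism_eigenvalue n c) + t)"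
    using prism_eigvec_neighbour_sum[OF n r c] unfolding v_def by (simp add: algebra_simps)
  also have "\<dots> = (prism_eigvecs n * ?D) $$ (r, c)"
    using r c by (simp add: prism_eigvecs_def v_def scalar_prod_def if_distrib sum.delta'
        cong: if_cong)
  finally show "(prism_adj_shift n t * prism_eigvecs n) $$ (r, c) = (prism_eigvecs n * ?D) $$ (r, c)" .
qed (simp_all add: prism_adj_shift_def prism_eigvecs_def)

lemma char_poly_prism_adj_shift:
  assumes n: "3 \<le> n"
  shows "char_poly (prism_adj_shift n t)
    = (\<Prod>a\<in># mset (map (\<lambda>i. complex_of_real (prism_eigenvalue n i) + t) [0..<2 * n]). [:- a, 1:])"
  using n
  by (intro char_poly_if_diagonalized[OF _ _ _ prism_eigvecs_inverse prism_adj_shift_eigvecs])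
    (auto simp: prism_adj_shift_def prism_eigvecs_def prism_eigvecs_inv_def)

lemma eigvals_prism_adj:
  assumes n: "3 \<le> n"
  shows "eigvals (adj_mat (2 * n) (prism_edge n))
    = mset (map (\<lambda>i. complex_of_real (prism_eigenvalue n i)) [0..<2 * n])"
proof (rule eigvals_eqI)
  have "map_mat complex_of_real (adj_mat (2 * n) (prism_edge n)) = prism_adj_shift n 0"
    unfolding adj_mat_def prism_adj_shift_def by (rule eq_matI) auto
  then show "char_poly (map_mat complex_of_real (adj_mat (2 * n) (prism_edge n)))
    = (\<Prod>a\<in># mset (map (\<lambda>i. complex_of_real (prism_eigenvalue n i)) [0..<2 * n]). [:- a, 1:])"
    using char_poly_prism_adj_shift[OF n, of 0] by simp
qed

lemma eigvals_prism_signless_laplacian: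
  assumes n: "3 \<le> n"
  shows "eigvals (signless_laplacian (2 * n) (prism_edge n))
    = mset (map (\<lambda>i. complex_of_real (prism_eigenvalue n i) + 3) [0..<2 * n])"
proof (rule eigvals_eqI)
  have "map_mat complex_of_real (signless_laplacian (2 * n) (prism_edge n)) = prism_adj_shift n 3"
    unfolding signless_laplacian_def deg_mat_def adj_mat_def prism_adj_shift_def
    by (rule eq_matI) (auto simp: prism_vdeg[OF n])
  then show "char_poly (map_mat complex_of_real (signless_laplacian (2 * n) (prism_edge n)))
    = (\<Prod>a\<in># mset (map (\<lambda>i. complex_of_real (prism_eigenvalue n i) + 3) [0..<2 * n]). [:- a, 1:])"
    using char_poly_prism_adj_shift[OF n, of 3] by simp
qed

lemma sum_mset_image_mset_map_upt:
  "sum_mset (image_mset g (mset (map f [0..<N]))) = (\<Sum>c\<in>{0..<N}. g (f c))"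
  by (induction N) (auto simp: add.commute)

lemma graph_energy_prism:
  "3 \<le> n \<Longrightarrow> graph_energy (2 * n) (prism_edge n) = (\<Sum>c\<in>{0..<2 * n}. \<bar>prism_eigenvalue n c\<bar>)"
  unfolding graph_energy_def eigvals_prism_adj sum_mset_image_mset_map_upt by simp

lemma signless_laplacian_energy_prism:
  assumes n: "3 \<le> n"
  shows "signless_laplacian_energy (2 * n) (prism_edge n) = (\<Sum>c\<in>{0..<2 * n}. \<bar>prism_eigenvalue n c\<bar>)"
proof -
  have "2 * real (num_edges (2 * n) (prism_edge n)) / real (2 * n) = 3"
    using n by (simp add: prism_num_edges)
  then show ?thesis
    unfolding signless_laplacian_energy_def eigvals_prism_signless_laplacian[OF n]
      sum_mset_image_mset_map_upt
    by simp
qed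

lemma sum_prism_eigenvalue:
  assumes "0 < n"
  shows "(\<Sum>c\<in>{0..<2 * n}. g (prism_eigenvalue n c))
    = (\<Sum>j<n. g (2 * cos (2 * pi * real j / real n) + 1) + g (2 * cos (2 * pi * real j / real n) - 1))"
  unfolding sum_atLeast0LessThan_double sum.distrib[symmetric]
  using assms by (intro sum.cong) (auto simp: prism_eigenvalue_def)

lemma sum_cos_multiple_eq_0:
  assumes "0 < m" "m < n"
  shows "(\<Sum>j<n. cos (2 * pi * real (m * j) / real n)) = 0"
proof -
  have "Re ((unity_root n ^ m) ^ j) = cos (2 * pi * real (m * j) / real n)" for j
    unfolding power_mult[symmetric] by (simp add: unity_root_pow)
  then show ?thesis
    using arg_cong[OF sum_unity_root_pow_eq_0[OF assms], of Re] by (simp add: Re_sum)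
qed

lemma sum_cos_sq:
  assumes n: "3 \<le> n"
  shows "(\<Sum>j<n. (cos (2 * pi * real j / real n))\<^sup>2) = real n / 2"
proof -
  have "(cos (2 * pi * real j / real n))\<^sup>2 = (1 + cos (2 * pi * real (2 * j) / real n)) / 2" for j
    using cos_double_cos[of "2 * pi * real j / real n"] by (simp add: field_simps)
  then have "(\<Sum>j<n. (cos (2 * pi * real j / real n))\<^sup>2)
      = (\<Sum>j<n. (1 + cos (2 * pi * real (2 * j) / real n)) / 2)"
    by (rule sum.cong[OF refl])
  also have "\<dots> = (real n + (\<Sum>j<n. cos (2 * pi * real (2 * j) / real n))) / 2"
    by (simp add: sum_divide_distrib[symmetric] sum.distrib)
  finally show ?thesis using sum_cos_multiple_eq_0[of 2 n] n by simp
qed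

lemma sum_prism_eigenvalue_sq:
  assumes n: "3 \<le> n"
  shows "(\<Sum>c\<in>{0..<2 * n}. (prism_eigenvalue n c)\<^sup>2) = 6 * real n"
proof -
  have "(\<Sum>c\<in>{0..<2 * n}. (prism_eigenvalue n c)\<^sup>2)
      = (\<Sum>j<n. 8 * (cos (2 * pi * real j / real n))\<^sup>2 + 2)"
    using n sum_prism_eigenvalue[of n "\<lambda>x. x\<^sup>2"] by (simp add: power2_eq_square algebra_simps)
  also have "\<dots> = 8 * (\<Sum>j<n. (cos (2 * pi * real j / real n))\<^sup>2) + 2 * real n"
    by (simp add: sum.distrib sum_distrib_left)
  finally show ?thesis using sum_cos_sq[OF n] by simp
qed

lemma sum_sq_less_card_mult_sum_sq:
  fixes x :: "'a \<Rightarrow> real"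
  assumes R: "finite R" and ij: "i \<in> R" "j \<in> R" "x i \<noteq> x j"
  shows "(\<Sum>c\<in>R. x c)\<^sup>2 < card R * (\<Sum>c\<in>R. (x c)\<^sup>2)"
proof -
  define N S Q where "N = real (card R)" "S = (\<Sum>c\<in>R. x c)" "Q = (\<Sum>c\<in>R. (x c)\<^sup>2)"
  have N: "N > 0" using R ij unfolding N_S_Q_def by (auto simp: card_gt_0_iff)
  define m where "m = S / N"
  have "(\<Sum>c\<in>R. (x c - m)\<^sup>2) = Q - 2 * m * S + N * m\<^sup>2"
    unfolding N_S_Q_def
    by (simp add: power2_diff sum.distrib sum_subtractf sum_distrib_left[symmetric]
        sum_distrib_right[symmetric] algebra_simps)
  also have "\<dots> = Q - S\<^sup>2 / N" unfolding m_def using N by (simp add: field_simps power2_eq_square)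
  finally have variance: "(\<Sum>c\<in>R. (x c - m)\<^sup>2) = Q - S\<^sup>2 / N" .
  have "x i \<noteq> m \<or> x j \<noteq> m" using ij by auto
  then obtain k where k: "k \<in> R" "(x k - m)\<^sup>2 > 0" using ij by auto
  have "(x k - m)\<^sup>2 \<le> (\<Sum>c\<in>R. (x c - m)\<^sup>2)"
    using R k by (intro member_le_sum) auto
  then have "S\<^sup>2 / N < Q" using k variance by linarith
  then show ?thesis using N unfolding N_S_Q_def by (simp add: divide_less_eq mult.commute)
qed

lemma sum_abs_prism_eigenvalue_less:
  assumes n: "3 \<le> n"
  shows "(\<Sum>c\<in>{0..<2 * n}. \<bar>prism_eigenvalue n c\<bar>) < 3 + sqrt (3 * (2 * real n - 1) * (2 * real n - 3))"
proof -
  define R where "R = {1..<2 * n}"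
  have split: "{0..<2 * n} = insert 0 R" and R: "0 \<notin> R" "finite R" "n \<in> R"
    using n unfolding R_def by auto
  have "prism_eigenvalue n 0 = 3" "prism_eigenvalue n n = 1"
    using n by (simp_all add: prism_eigenvalue_def)
  then have E: "(\<Sum>c\<in>{0..<2 * n}. \<bar>prism_eigenvalue n c\<bar>) = 3 + (\<Sum>c\<in>R. \<bar>prism_eigenvalue n c\<bar>)"
    and Q: "(\<Sum>c\<in>R. \<bar>prism_eigenvalue n c\<bar>\<^sup>2) = 6 * real n - 9"
    using sum_prism_eigenvalue_sq[OF n] R unfolding split by simp_all
  have card: "real (card R) = 2 * real n - 1" unfolding R_def using n by simp
  have "\<exists>j\<in>R. \<bar>prism_eigenvalue n n\<bar> \<noteq> \<bar>prism_eigenvalue n j\<bar>"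
  proof (rule ccontr)
    assume "\<not> ?thesis"
    then have "(\<Sum>c\<in>R. \<bar>prism_eigenvalue n c\<bar>\<^sup>2) = card R"
      using \<open>prism_eigenvalue n n = 1\<close> by simp
    then show False using Q card n by simp
  qed
  then have "(\<Sum>c\<in>R. \<bar>prism_eigenvalue n c\<bar>)\<^sup>2 < (2 * real n - 1) * (6 * real n - 9)"
    using sum_sq_less_card_mult_sum_sq[OF R(2) R(3), where x = "\<lambda>c. \<bar>prism_eigenvalue n c\<bar>"] Q card
    by auto
  also have "\<dots> = 3 * (2 * real n - 1) * (2 * real n - 3)" by (simp add: algebra_simps)
  finally show ?thesis unfolding E using real_less_rsqrt by simp
qed

lemma sum_abs_prism_eigenvalue_ge:
  assumes n: "3 \<le> n"
  shows "(\<Sum>c\<in>{0..<2 * n}. \<bar>prism_eigenvalue n c\<bar>) \<ge> 2 * real n + 2 + (if even n then 2 else 0)"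
proof -
  define f where "f j = \<bar>2 * cos (2 * pi * real j / real n) + 1\<bar>
    + \<bar>2 * cos (2 * pi * real j / real n) - 1\<bar> - 2" for j
  have f_nonneg: "f j \<ge> 0" for j unfolding f_def by linarith
  have "(\<Sum>c\<in>{0..<2 * n}. \<bar>prism_eigenvalue n c\<bar>) = 2 * real n + (\<Sum>j<n. f j)"
    using n sum_prism_eigenvalue[of n abs] by (simp add: f_def sum_subtractf)
  moreover have "(\<Sum>j<n. f j) \<ge> 2 + (if even n then 2 else 0)"
  proof (cases "even n")
    case True
    then have "cos (2 * pi * real (n div 2) / real n) = -1"
      using n by (auto elim!: evenE)
    then have "f (n div 2) = 2" "f 0 = 2" unfolding f_def by simp_all
    moreover have "(\<Sum>j\<in>{0, n div 2}. f j) \<le> (\<Sum>j<n. f j)"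
      using n f_nonneg by (intro sum_mono2) auto
    ultimately show ?thesis using True n by simp
  next
    case False
    have "f 0 = 2" unfolding f_def by simp
    moreover have "(\<Sum>j\<in>{0}. f j) \<le> (\<Sum>j<n. f j)"
      using n f_nonneg by (intro sum_mono2) auto
    ultimately show ?thesis using False by simp
  qed
  ultimately show ?thesis by linarith
qed

lemma sum_abs_prism_eigenvalue_4: "(\<Sum>c\<in>{0..<2 * 4}. \<bar>prism_eigenvalue 4 c\<bar>) = 12"
proof -
  have "cos (pi * 3 / 2) = 0" using cos_periodic_pi[of "pi / 2"] by (simp add: field_simps)
  moreover have "(\<Sum>c\<in>{0..<2 * 4}. \<bar>prism_eigenvalue 4 c\<bar>)
      = (\<Sum>j<4. \<bar>2 * cos (2 * pi * real j / 4) + 1\<bar> + \<bar>2 * cos (2 * pi * real j / 4) - 1\<bar>)"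
    using sum_prism_eigenvalue[of 4 abs] by simp
  ultimately show ?thesis by (simp add: numeral_eq_Suc)
qed

definition prism_energy_bound :: "nat \<Rightarrow> real" where
  "prism_energy_bound n =
    (if n mod 3 = 0 then 2 * real n
     else if n mod 6 = 1 \<or> n mod 6 = 2 then
       6 * real n * sqrt (2 * cos (2 * pi * real (n div 6) / real n) - 1)
         / (1 + cos (2 * pi * real (n div 6) / real n))
     else
       6 * real n * sqrt (1 - 2 * cos (2 * pi * of_int \<lceil>real n / 6\<rceil> / real n))
         / (2 - cos (2 * pi * of_int \<lceil>real n / 6\<rceil> / real n)))"

lemma abs_cos_diff_le:
  fixes x y :: real
  shows "\<bar>cos x - cos y\<bar> \<le> \<bar>x - y\<bar>"
proof -
  have "\<bar>cos x - cos y\<bar> = 2 * \<bar>sin ((x + y) / 2)\<bar> * \<bar>sin ((y - x) / 2)\<bar>"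
    by (simp add: cos_diff_cos abs_mult)
  also have "\<dots> \<le> 2 * 1 * \<bar>(y - x) / 2\<bar>"
    by (intro mult_mono abs_sin_x_le_abs_x) simp_all
  finally show ?thesis by simp
qed

(* The angle 2 pi k / n in the bound is the multiple of 2 pi / n nearest to pi / 3; it misses
   pi / 3 by pi / (3 n) for odd n and by 2 pi / (3 n) for even n. *)
lemma prism_energy_bound_eq_if_mod_6_le_2:
  assumes r: "n mod 6 = 1 \<or> n mod 6 = 2"
  defines "d \<equiv> 2 * cos (2 * pi * real (n div 6) / real n) - 1"
  shows "prism_energy_bound n = 12 * real n * sqrt d / (3 + d)"
    and "0 \<le> d" "d \<le> 2 * pi * real (n mod 6) / (3 * real n)"
proof -
  define \<theta> where "\<theta> = 2 * pi * real (n div 6) / real n"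
  have n: "real n > 0" using r by (auto intro!: gr0I)
  have "real n = 6 * real (n div 6) + real (n mod 6)"
    by (metis div_mult_mod_eq of_nat_add of_nat_mult of_nat_numeral mult.commute)
  then have gap: "pi / 3 - \<theta> = pi * real (n mod 6) / (3 * real n)"
    unfolding \<theta>_def using n by (simp add: field_simps)
  moreover have "pi * real (n mod 6) / (3 * real n) \<ge> 0" by simp
  moreover have "0 \<le> \<theta>" unfolding \<theta>_def by simp
  ultimately have \<theta>: "0 \<le> \<theta>" "\<theta> \<le> pi / 3" by linarith+
  then have "cos (pi / 3) \<le> cos \<theta>" by (intro cos_monotone_0_pi_le) auto
  then show "0 \<le> d" unfolding d_def \<theta>_def[symmetric] cos_60 by simp
  show "d \<le> 2 * pi * real (n mod 6) / (3 * real n)"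
    using abs_cos_diff_le[of \<theta> "pi / 3"] \<theta> gap unfolding d_def \<theta>_def[symmetric] cos_60 by simp
  have "n mod 3 \<noteq> 0" using r by presburger
  then have "prism_energy_bound n = 6 * real n * sqrt d / (1 + cos \<theta>)"
    using r unfolding prism_energy_bound_def d_def \<theta>_def by simp
  also have "1 + cos \<theta> = (3 + d) / 2" unfolding d_def \<theta>_def by simp
  finally show "prism_energy_bound n = 12 * real n * sqrt d / (3 + d)" by simp
qed

lemma ceiling_sixth_eq:
  assumes "n mod 6 = 4 \<or> n mod 6 = 5"
  shows "\<lceil>real n / 6\<rceil> = int (n div 6) + 1"
proof (rule ceiling_unique)
  have "real n = 6 * real (n div 6) + real (n mod 6)"
    by (metis div_mult_mod_eq of_nat_add of_nat_mult of_nat_numeral mult.commute)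
  moreover have "4 \<le> real (n mod 6)" "real (n mod 6) \<le> 5" using assms by auto
  ultimately show "real_of_int (int (n div 6) + 1) - 1 < real n / 6"
    "real n / 6 \<le> real_of_int (int (n div 6) + 1)"
    by auto
qed

lemma prism_energy_bound_eq_if_mod_6_ge_4:
  assumes r: "n mod 6 = 4 \<or> n mod 6 = 5"
  defines "d \<equiv> 1 - 2 * cos (2 * pi * of_int \<lceil>real n / 6\<rceil> / real n)"
  shows "prism_energy_bound n = 12 * real n * sqrt d / (3 + d)"
    and "0 \<le> d" "d \<le> 2 * pi * real (6 - n mod 6) / (3 * real n)"
proof -
  define \<theta> where "\<theta> = 2 * pi * real (n div 6 + 1) / real n"
  have \<theta>_eq: "2 * pi * of_int \<lceil>real n / 6\<rceil> / real n = \<theta>"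
    unfolding \<theta>_def ceiling_sixth_eq[OF r] by simp
  have n: "real n > 0" using r by (auto intro!: gr0I)
  have "n + (6 - n mod 6) = 6 * (n div 6 + 1)" using r by presburger
  then have "real n + real (6 - n mod 6) = 6 * real (n div 6 + 1)"
    by (metis of_nat_add of_nat_mult of_nat_numeral)
  then have gap: "\<theta> - pi / 3 = pi * real (6 - n mod 6) / (3 * real n)"
    unfolding \<theta>_def using n by (simp add: field_simps)
  have "2 * (n div 6 + 1) \<le> n" using r by presburger
  then have "pi * (2 * real (n div 6 + 1)) \<le> pi * real n"
    by (intro mult_left_mono) simp_all
  then have "\<theta> \<le> pi" unfolding \<theta>_def using n by (simp add: pos_divide_le_eq algebra_simps)
  moreover have "pi * real (6 - n mod 6) / (3 * real n) \<ge> 0" by simp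
  then have "pi / 3 \<le> \<theta>" using gap by linarith
  ultimately have \<theta>: "pi / 3 \<le> \<theta>" "\<theta> \<le> pi" by auto
  then have "cos \<theta> \<le> cos (pi / 3)" by (intro cos_monotone_0_pi_le) auto
  then show "0 \<le> d" unfolding d_def \<theta>_eq cos_60 by simp
  show "d \<le> 2 * pi * real (6 - n mod 6) / (3 * real n)"
    using abs_cos_diff_le[of \<theta> "pi / 3"] \<theta> gap unfolding d_def \<theta>_eq cos_60 by simp
  have "n mod 3 \<noteq> 0" "\<not> (n mod 6 = 1 \<or> n mod 6 = 2)" using r by presburger+
  then have "prism_energy_bound n = 6 * real n * sqrt d / (2 - cos \<theta>)"
    unfolding prism_energy_bound_def d_def \<theta>_eq by simp
  also have "2 - cos \<theta> = (3 + d) / 2" unfolding d_def \<theta>_eq by simp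
  finally show "prism_energy_bound n = 12 * real n * sqrt d / (3 + d)" by simp
qed

lemma prism_energy_bound_sqrt_form:
  assumes "n mod 3 \<noteq> 0"
  obtains d where "prism_energy_bound n = 12 * real n * sqrt d / (3 + d)" "0 \<le> d"
    "d \<le> 2 * pi * (if even n then 2 else 1) / (3 * real n)"
proof (cases "n mod 6 = 1 \<or> n mod 6 = 2")
  case True
  then have "n mod 6 = (if even n then 2 else 1)" by presburger
  moreover note bound = prism_energy_bound_eq_if_mod_6_le_2[OF True]
  ultimately show ?thesis by (intro that[OF bound(1,2)]) (use bound(3) in \<open>simp split: if_splits\<close>)
next
  case False
  then have r: "n mod 6 = 4 \<or> n mod 6 = 5" using assms by presburger
  then have "6 - n mod 6 = (if even n then 2 else 1)" by presburger
  moreover note bound = prism_energy_bound_eq_if_mod_6_ge_4[OF r]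
  ultimately show ?thesis by (intro that[OF bound(1,2)]) (use bound(3) in \<open>simp split: if_splits\<close>)
qed

lemma sqrt_div_three_plus_mono:
  fixes d D :: real
  assumes "0 \<le> d" "d \<le> D" "D \<le> 3"
  shows "sqrt d / (3 + d) \<le> sqrt D / (3 + D)"
proof -
  define u v where "u = sqrt d" "v = sqrt D"
  have uv: "0 \<le> u" "u \<le> v" "d = u\<^sup>2" "D = v\<^sup>2" unfolding u_v_def using assms by auto
  have "u * v \<le> v * v" using uv by (intro mult_right_mono) auto
  then have "u * v \<le> 3" using uv assms by (simp add: power2_eq_square)
  then have "0 \<le> (v - u) * (3 - u * v)" using uv by simp
  then have "u * (3 + v\<^sup>2) \<le> v * (3 + u\<^sup>2)" by (simp add: algebra_simps power2_eq_square)
  then show ?thesis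
    using uv unfolding u_v_def[symmetric] by (simp add: divide_simps add_pos_nonneg)
qed

lemma sqrt_div_three_plus_less:
  fixes d D s :: real
  assumes "0 \<le> d" "d \<le> D" "D \<le> 3" "sqrt D < s"
  shows "sqrt d / (3 + d) < s / (3 + D)"
proof -
  have "0 \<le> D" using assms by linarith
  then have "sqrt D / (3 + D) < s / (3 + D)" using assms by (simp add: divide_strict_right_mono)
  then show ?thesis using sqrt_div_three_plus_mono[OF assms(1-3)] by linarith
qed

lemma mult_sqrt_div_three_plus_less:
  fixes x d \<rho> T :: real
  assumes x: "0 < x" and d: "0 \<le> d" "d \<le> 2 * pi * \<rho> / (3 * x)"
    and T: "0 < T" "32 * pi * \<rho> * x / 3 < T\<^sup>2"
  shows "12 * x * sqrt d / (3 + d) < T"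
proof -
  have "12 * x * sqrt d / (3 + d) \<le> 12 * x * sqrt d / 3"
    using x d by (intro divide_left_mono) auto
  also have "\<dots> = sqrt (16 * x\<^sup>2 * d)"
    using x by (simp add: real_sqrt_mult)
  also have "\<dots> \<le> sqrt (16 * x\<^sup>2 * (2 * pi * \<rho> / (3 * x)))"
    using d by (intro real_sqrt_le_mono mult_left_mono) auto
  also have "16 * x\<^sup>2 * (2 * pi * \<rho> / (3 * x)) = 32 * pi * \<rho> * x / 3"
    using x by (simp add: field_simps power2_eq_square)
  also have "sqrt (32 * pi * \<rho> * x / 3) < T" using T by (intro real_less_lsqrt) auto
  finally show ?thesis .
qed

(* Bounding 3 + d below by 3 suffices for large n; n = 5, 8, 10 need the exact value. *)
lemma prism_energy_bound_less:
  assumes n: "3 \<le> n" "n \<noteq> 4"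
  shows "prism_energy_bound n < 2 * real n + 2 + (if even n then 2 else 0)"
proof (cases "n mod 3 = 0")
  case True
  then show ?thesis by (simp add: prism_energy_bound_def)
next
  case False
  define \<rho> :: real where "\<rho> = (if even n then 2 else 1)"
  obtain d where bound: "prism_energy_bound n = 12 * real n * (sqrt d / (3 + d))"
    and d: "0 \<le> d" "d \<le> 2 * pi * \<rho> / (3 * real n)"
    using prism_energy_bound_sqrt_form[OF False] unfolding \<rho>_def by (metis times_divide_eq_right)
  have pi: "pi \<le> 3.1416" using pi_approx(2) by simp
  have "0 \<le> \<rho> * real n" by (simp add: \<rho>_def)
  then have crude: "32 * pi * \<rho> * real n / 3 \<le> 34 * \<rho> * real n"
    using mult_right_mono[of "32 * pi / 3" 34 "\<rho> * real n"] pi by (simp add: algebra_simps)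
  have "n = 5 \<or> n = 10 \<or> n = 8 \<or> 7 \<le> n \<and> odd n \<or> 14 \<le> n \<and> even n"
    using n False by presburger
  then consider "n = 5 \<or> n = 10" | "n = 8" | "7 \<le> n" "odd n" | "14 \<le> n" "even n"
    by blast
  then have "12 * real n * (sqrt d / (3 + d)) < 2 * real n + 2 * \<rho>"
  proof cases
    case 1
    then have "2 * pi * \<rho> / (3 * real n) = 2 * pi / 15" by (auto simp: \<rho>_def)
    then have "d \<le> 0.419" using d pi by simp
    moreover have "sqrt 0.419 < (0.648 :: real)" by (rule real_less_lsqrt) (simp_all add: power2_eq_square)
    ultimately have "sqrt d / (3 + d) < 0.648 / (3 + 0.419)"
      using d by (intro sqrt_div_three_plus_less) simp_all
    then show ?thesis using 1 by (auto simp: \<rho>_def)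
  next
    case 2
    then have "2 * pi * \<rho> / (3 * real n) = pi / 6" by (simp add: \<rho>_def)
    then have "d \<le> 0.5236" using d pi by simp
    moreover have "sqrt 0.5236 < (0.7237 :: real)" by (rule real_less_lsqrt) (simp_all add: power2_eq_square)
    ultimately have "sqrt d / (3 + d) < 0.7237 / (3 + 0.5236)"
      using d by (intro sqrt_div_three_plus_less) simp_all
    then show ?thesis using 2 by (simp add: \<rho>_def)
  next
    case 3
    then have "\<rho> = 1" by (simp add: \<rho>_def)
    have "7 \<le> real n" using 3 by simp
    moreover have "7 * real n \<le> real n * real n" using 3 by (intro mult_right_mono) auto
    moreover have "(2 * real n + 2 * 1)\<^sup>2 = 4 * (real n * real n) + 8 * real n + 4"
      by (simp add: power2_eq_square algebra_simps)
    ultimately have "32 * pi * \<rho> * real n / 3 < (2 * real n + 2 * \<rho>)\<^sup>2"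
      using crude unfolding \<open>\<rho> = 1\<close> by linarith
    then show ?thesis
      using d 3 mult_sqrt_div_three_plus_less[of "real n" d \<rho>] by (simp add: \<rho>_def)
  next
    case 4
    then have "\<rho> = 2" by (simp add: \<rho>_def)
    have "14 \<le> real n" using 4 by simp
    moreover have "14 * real n \<le> real n * real n" using 4 by (intro mult_right_mono) auto
    moreover have "(2 * real n + 2 * 2)\<^sup>2 = 4 * (real n * real n) + 16 * real n + 16"
      by (simp add: power2_eq_square algebra_simps)
    ultimately have "32 * pi * \<rho> * real n / 3 < (2 * real n + 2 * \<rho>)\<^sup>2"
      using crude unfolding \<open>\<rho> = 2\<close> by linarith
    then show ?thesis
      using d 4 mult_sqrt_div_three_plus_less[of "real n" d \<rho>] by (simp add: \<rho>_def)
  qed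
  then show ?thesis unfolding bound \<rho>_def by (cases "even n") simp_all
qed

lemma prism_energy_bound_4: "prism_energy_bound 4 = 12"
proof -
  have "\<lceil>real 4 / 6\<rceil> = (1 :: int)" using ceiling_sixth_eq[of 4] by simp
  then show ?thesis by (simp add: prism_energy_bound_def)
qed

theorem mainTheorem18:
  fixes n :: nat
  assumes "n \<ge> 3"
  defines "EG \<equiv> graph_energy (2 * n) (prism_edge n)"
      and "QEG \<equiv> signless_laplacian_energy (2 * n) (prism_edge n)"
      and "LB \<equiv>
        (if n mod 3 = 0 then 2 * real n
         else if n mod 6 = 1 \<or> n mod 6 = 2 then
           6 * real n * sqrt (2 * cos (2 * pi * real (n div 6) / real n) - 1)
             / (1 + cos (2 * pi * real (n div 6) / real n))
         else
           6 * real n * sqrt (1 - 2 * cos (2 * pi * of_int \<lceil>real n / 6\<rceil> / real n))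
             / (2 - cos (2 * pi * of_int \<lceil>real n / 6\<rceil> / real n)))"
  shows "3 + sqrt (3 * (2 * real n - 1) * (2 * real n - 3)) > EG
         \<and> EG = QEG \<and> EG \<ge> LB \<and> (EG = LB \<longleftrightarrow> n = 4)"
proof -
  have EG: "EG = (\<Sum>c\<in>{0..<2 * n}. \<bar>prism_eigenvalue n c\<bar>)"
    unfolding EG_def using assms(1) by (rule graph_energy_prism)
  have QEG: "QEG = EG"
    unfolding QEG_def EG using assms(1) by (rule signless_laplacian_energy_prism)
  have LB: "LB = prism_energy_bound n"
    unfolding LB_def prism_energy_bound_def ..
  have "n = 4 \<Longrightarrow> EG = LB"
    unfolding EG LB using sum_abs_prism_eigenvalue_4 prism_energy_bound_4 by simp
  moreover have "n \<noteq> 4 \<Longrightarrow> LB < EG"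
    unfolding EG LB
    using sum_abs_prism_eigenvalue_ge[OF assms(1)] prism_energy_bound_less[OF assms(1)] by fastforce
  ultimately show ?thesis
    using sum_abs_prism_eigenvalue_less[OF assms(1)] QEG unfolding EG by fastforce
qed

end
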